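(* The 1D aTAM is not intrinsically universal: there is no finite 1D tile set $U$ (and temperature $\tau'$) with computable functions $\mathcal{R},S$ such that every 1D aTAM system $\mathcal{T}$ is simulated, at some scale $m$ under $\mathcal{R}(\mathcal{T})$, by the 1D aTAM system $(U,S(\mathcal{T}),\tau')$.
   Context: 1D aTAM: a tile type has a west glue and an east glue, each a pair (finite string label, nonnegative integer strength); a tile set is a finite set of tile types. Assemblies are partial functions $\alpha:\mathbb{Z}\dashrightarrow T$ whose domain is a nonempty interval; adjacent tiles interact if the east glue of the left tile equals the west glue of the right tile with positive strength; $\alpha$ is $\tau$-stable if every cut between consecutive tiles has interaction strength $\ge\tau$. A system $\mathcal{T}=(T,\sigma,\tau)$ has finite $\tau$-stable seed $\sigma$; growth proceeds by single $\tau$-stable tile additions (finite or infinite assembly sequences, result = limit); $\mathcal{A}[\mathcal{T}]$ are the producible assemblies and $\mathcal{A}_\Box[\mathcal{T}]$ the producible ones to which no tile can be added. Simulation: an $m$-block over $S$ is a partial function $\{0,\dots,m-1\}\dashrightarrow S$; $\alpha^m_x$ is $i\mapsto\alpha(mx+i)$. A partial $R$ from $m$-blocks to $T$ is valid if $\alpha\sqsubseteq\beta$, $\alpha\in\mathrm{dom}R$ imply $R(\beta)=R(\alpha)$; $R^*(\alpha')$ is $x\mapsto R(\alpha'^m_x)$. $\alpha'$ maps cleanly if each nonempty block at $x$ has $x$ or $x\pm1$ in $\mathrm{dom}\,R^*(\alpha')$ (or there is at most one nonempty block). $\mathcal{S}$ simulates $\mathcal{T}$ under $R$ if: (i) $R^*$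 maps $\mathcal{A}[\mathcal{S}]$ onto $\mathcal{A}[\mathcal{T}]$ and $\mathcal{A}_\Box[\mathcal{S}]$ onto $\mathcal{A}_\Box[\mathcal{T}]$, all producible assemblies mapping cleanly; (ii) producible $\alpha'\to^\mathcal{S}\beta'$ implies $R^*(\alpha')\to^\mathcal{T}R^*(\beta')$; (iii) for every $\alpha\in\mathcal{A}[\mathcal{T}]$ there is $\Pi\subset\mathcal{A}[\mathcal{S}]$ with $R^*=\alpha$ on $\Pi$ such that for every producible $\beta$ with $\alpha\to^\mathcal{T}\beta$: each $\alpha'\in\Pi$ produces some $\beta'$ with $R^*(\beta')=\beta$, and whenever producible $\alpha''\to^\mathcal{S}\beta'$ with $R^*(\alpha'')=\alpha$, $R^*(\beta')=\beta$, some $\alpha'\in\Pi$ produces $\alpha''$. *)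

theory Defs
  imports Main "HOL-Library.Nat_Bijection"
begin

(* a glue: (label, strength); a tile type: (west glue, east glue) *)
type_synonym glue = "string \<times> nat"
type_synonym tile = "glue \<times> glue"
type_synonym assembly = "int \<Rightarrow> tile option"
type_synonym block = "nat \<Rightarrow> tile option"
type_synonym system = "tile set \<times> assembly \<times> nat"

definition west :: "tile \<Rightarrow> glue" where "west t = fst t"
definition east :: "tile \<Rightarrow> glue" where "east t = snd t"

definition strength :: "tile \<Rightarrow> tile \<Rightarrow> nat" where
  "strength a b = (if east a = west b \<and> snd (east a) > 0 then snd (east a) else 0)"

definition is_interval :: "int set \<Rightarrow> bool" where
  "is_interval D \<longleftrightarrow> (\<forall>x y z. x \<in> D \<longrightarrow> z \<in> D \<longrightarrow> x \<le> y \<longrightarrow> y \<le> z \<longrightarrow> y \<in> D)"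

definition is_assembly :: "assembly \<Rightarrow> bool" where
  "is_assembly \<alpha> \<longleftrightarrow> dom \<alpha> \<noteq> {} \<and> is_interval (dom \<alpha>)"

definition stable :: "nat \<Rightarrow> assembly \<Rightarrow> bool" where
  "stable \<tau> \<alpha> \<longleftrightarrow> (\<forall>x. x \<in> dom \<alpha> \<longrightarrow> x + 1 \<in> dom \<alpha> \<longrightarrow>
      \<tau> \<le> strength (the (\<alpha> x)) (the (\<alpha> (x + 1))))"

definition is_system :: "tile set \<Rightarrow> assembly \<Rightarrow> nat \<Rightarrow> bool" where
  "is_system T \<sigma> \<tau> \<longleftrightarrow> finite T \<and> 0 < \<tau> \<and> is_assembly \<sigma> \<and> finite (dom \<sigma>)
     \<and> ran \<sigma> \<subseteq> T \<and> stable \<tau> \<sigma>"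

definition step :: "tile set \<Rightarrow> nat \<Rightarrow> assembly \<Rightarrow> assembly \<Rightarrow> bool" where
  "step T \<tau> \<alpha> \<beta> \<longleftrightarrow> (\<exists>x t. t \<in> T \<and> \<alpha> x = None \<and> \<beta> = \<alpha>(x \<mapsto> t)
       \<and> is_assembly \<beta> \<and> stable \<tau> \<beta>)"

definition seq_limit :: "(nat \<Rightarrow> assembly) \<Rightarrow> assembly \<Rightarrow> bool" where
  "seq_limit f \<beta> \<longleftrightarrow> (\<forall>x. (\<beta> x = None \<longleftrightarrow> (\<forall>i. f i x = None))
       \<and> (\<forall>i. f i x \<noteq> None \<longrightarrow> \<beta> x = f i x))"

definition produces :: "tile set \<Rightarrow> nat \<Rightarrow> assembly \<Rightarrow> assembly \<Rightarrow> bool" where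
  "produces T \<tau> \<alpha> \<beta> \<longleftrightarrow> (step T \<tau>)\<^sup>*\<^sup>* \<alpha> \<beta> \<or>
     (\<exists>f. f 0 = \<alpha> \<and> (\<forall>i. step T \<tau> (f i) (f (Suc i))) \<and> seq_limit f \<beta>)"

definition prodA :: "tile set \<Rightarrow> assembly \<Rightarrow> nat \<Rightarrow> assembly set" where
  "prodA T \<sigma> \<tau> = {\<alpha>. produces T \<tau> \<sigma> \<alpha>}"

definition termA :: "tile set \<Rightarrow> assembly \<Rightarrow> nat \<Rightarrow> assembly set" where
  "termA T \<sigma> \<tau> = {\<alpha> \<in> prodA T \<sigma> \<tau>. \<not> (\<exists>\<beta>. step T \<tau> \<alpha> \<beta>)}"

definition mblock :: "nat \<Rightarrow> assembly \<Rightarrow> int \<Rightarrow> block" where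
  "mblock m \<alpha> x = (\<lambda>i. if i < m then \<alpha> (int m * x + int i) else None)"

definition is_mblock :: "nat \<Rightarrow> tile set \<Rightarrow> block \<Rightarrow> bool" where
  "is_mblock m S b \<longleftrightarrow> dom b \<subseteq> {..<m} \<and> ran b \<subseteq> S"

definition valid_rep :: "nat \<Rightarrow> tile set \<Rightarrow> (block \<rightharpoonup> tile) \<Rightarrow> bool" where
  "valid_rep m S R \<longleftrightarrow> (\<forall>a b. is_mblock m S a \<longrightarrow> is_mblock m S b \<longrightarrow> a \<subseteq>\<^sub>m b
      \<longrightarrow> a \<in> dom R \<longrightarrow> R b = R a)"

definition Rstar :: "nat \<Rightarrow> (block \<rightharpoonup> tile) \<Rightarrow> assembly \<Rightarrow> assembly" where
  "Rstar m R \<alpha> = (\<lambda>x. R (mblock m \<alpha> x))"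

definition maps_cleanly :: "nat \<Rightarrow> (block \<rightharpoonup> tile) \<Rightarrow> assembly \<Rightarrow> bool" where
  "maps_cleanly m R \<alpha> \<longleftrightarrow>
     (\<forall>x. mblock m \<alpha> x \<noteq> Map.empty \<longrightarrow> (\<exists>u\<in>{-1, 0, 1}. x + u \<in> dom (Rstar m R \<alpha>)))
   \<or> (\<forall>x y. mblock m \<alpha> x \<noteq> Map.empty \<longrightarrow> mblock m \<alpha> y \<noteq> Map.empty \<longrightarrow> x = y)"

definition simulates ::
  "tile set \<Rightarrow> assembly \<Rightarrow> nat \<Rightarrow> tile set \<Rightarrow> assembly \<Rightarrow> nat \<Rightarrow> nat \<Rightarrow> (block \<rightharpoonup> tile) \<Rightarrow> bool"
where
  "simulates S \<sigma>' \<tau>' T \<sigma> \<tau> m R \<longleftrightarrow>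
     0 < m \<and> valid_rep m S R
   \<comment> \<open>(i)\<close>
   \<and> Rstar m R ` prodA S \<sigma>' \<tau>' = prodA T \<sigma> \<tau>
   \<and> Rstar m R ` termA S \<sigma>' \<tau>' = termA T \<sigma> \<tau>
   \<and> (\<forall>\<alpha>'\<in>prodA S \<sigma>' \<tau>'. maps_cleanly m R \<alpha>')
   \<comment> \<open>(ii)\<close>
   \<and> (\<forall>\<alpha>'\<in>prodA S \<sigma>' \<tau>'. \<forall>\<beta>'\<in>prodA S \<sigma>' \<tau>'.
        produces S \<tau>' \<alpha>' \<beta>' \<longrightarrow> produces T \<tau> (Rstar m R \<alpha>') (Rstar m R \<beta>'))
   \<comment> \<open>(iii)\<close>
   \<and> (\<forall>\<alpha>\<in>prodA T \<sigma> \<tau>. \<exists>\<Pi>. \<Pi> \<subseteq> prodA S \<sigma>' \<tau>' \<and> (\<forall>\<alpha>'\<in>\<Pi>. Rstar m R \<alpha>' = \<alpha>) \<and>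
        (\<forall>\<beta>\<in>prodA T \<sigma> \<tau>. produces T \<tau> \<alpha> \<beta> \<longrightarrow>
           (\<forall>\<alpha>'\<in>\<Pi>. \<exists>\<beta>'. produces S \<tau>' \<alpha>' \<beta>' \<and> Rstar m R \<beta>' = \<beta>) \<and>
           (\<forall>\<alpha>'' \<beta>'. \<alpha>'' \<in> prodA S \<sigma>' \<tau>' \<and> produces S \<tau>' \<alpha>'' \<beta>'
               \<and> Rstar m R \<alpha>'' = \<alpha> \<and> Rstar m R \<beta>' = \<beta>
               \<longrightarrow> (\<exists>\<alpha>'\<in>\<Pi>. produces S \<tau>' \<alpha>' \<alpha>''))))"

datatype recf = Zero | Succ | Proj nat | Comp recf "recf list" | Prim recf recf | Mn recf

inductive reval :: "recf \<Rightarrow> nat list \<Rightarrow> nat \<Rightarrow> bool" where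
  "reval Zero xs 0"
| "reval Succ (x # xs) (Suc x)"
| "i < length xs \<Longrightarrow> reval (Proj i) xs (xs ! i)"
| "length ys = length gs \<Longrightarrow> (\<forall>i<length gs. reval (gs ! i) xs (ys ! i)) \<Longrightarrow>
     reval f ys z \<Longrightarrow> reval (Comp f gs) xs z"
| "reval f xs z \<Longrightarrow> reval (Prim f g) (0 # xs) z"
| "reval (Prim f g) (n # xs) y \<Longrightarrow> reval g (y # n # xs) z \<Longrightarrow> reval (Prim f g) (Suc n # xs) z"
| "reval f (n # xs) 0 \<Longrightarrow> (\<forall>k<n. \<exists>y. 0 < y \<and> reval f (k # xs) y) \<Longrightarrow> reval (Mn f) xs n"

definition rcomputable :: "(nat \<Rightarrow> nat) \<Rightarrow> bool" where
  "rcomputable g \<longleftrightarrow> (\<exists>p. \<forall>x. reval p [x] (g x))"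

definition computable_on :: "('a \<Rightarrow> bool) \<Rightarrow> ('a \<Rightarrow> nat) \<Rightarrow> ('b \<Rightarrow> nat) \<Rightarrow> ('a \<Rightarrow> 'b) \<Rightarrow> bool" where
  "computable_on P ein eout F \<longleftrightarrow> (\<exists>g. rcomputable g \<and> (\<forall>x. P x \<longrightarrow> g (ein x) = eout (F x)))"

definition enc_glue :: "glue \<Rightarrow> nat" where
  "enc_glue g = prod_encode (list_encode (map of_char (fst g)), snd g)"

definition enc_tile :: "tile \<Rightarrow> nat" where
  "enc_tile t = prod_encode (enc_glue (fst t), enc_glue (snd t))"

definition enc_tileset :: "tile set \<Rightarrow> nat" where
  "enc_tileset T = set_encode (enc_tile ` T)"

definition enc_asm :: "assembly \<Rightarrow> nat" where
  "enc_asm \<alpha> = set_encode ((\<lambda>x. prod_encode (int_encode x, enc_tile (the (\<alpha> x)))) ` dom \<alpha>)"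

definition enc_system :: "system \<Rightarrow> nat" where
  "enc_system s = (case s of (T, \<sigma>, \<tau>) \<Rightarrow> prod_encode (enc_tileset T, prod_encode (enc_asm \<sigma>, \<tau>)))"

definition enc_block :: "block \<Rightarrow> nat" where
  "enc_block b = set_encode ((\<lambda>i. prod_encode (i, enc_tile (the (b i)))) ` dom b)"

(* a representation function at scale m, given by its (finite) table on m-blocks over S *)
definition enc_rep :: "tile set \<Rightarrow> nat \<times> (block \<rightharpoonup> tile) \<Rightarrow> nat" where
  "enc_rep S r = (case r of (m, R) \<Rightarrow> prod_encode (m, set_encode
      {prod_encode (enc_block b, enc_tile t) | b t. is_mblock m S b \<and> R b = Some t}))"

definition valid_system :: "system \<Rightarrow> bool" where
  "valid_system s = (case s of (T, \<sigma>, \<tau>) \<Rightarrow> is_system T \<sigma> \<tau>)"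

end

theory Submission
  imports Defs
begin

(* In one dimension a tile attaches through a single cut, so between two occurrences of the
   same tile type the assembly can be repeated periodically: every cut of the periodic
   assembly is already a cut of the original one.  This pumping principle defeats any
   universal tile set U.  For k = |U| + 2, let the counter system have tiles c_0, ..., c_k,
   where c_i binds only to c_(i+1) on its east, and seed c_0 at the origin; its producible
   assemblies are the prefixes c_0 ... c_j.  A simulation at scale m confines the simulator's
   seed to positions below 2m (the seed is represented by block 0 and maps cleanly), and
   representing the full prefix forces a simulator tile at a position p >= m k.  Among the
   |U| + 1 positions just right of the seed some tile type repeats below p, so pumping yields
   a producible simulator assembly that is infinite to the right, which cannot map cleanly
   onto the bounded assemblies of the counter. *)

section \<open>Assembly sequences\<close>

lemma is_interval_atLeastAtMost: "is_interval {a..b}"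
  by (auto simp: is_interval_def)

lemma is_interval_atLeastAtMost_subset:
  assumes "is_interval D" "a \<in> D" "b \<in> D"
  shows "{a..b} \<subseteq> D"
proof
  fix x
  assume "x \<in> {a..b}"
  then show "x \<in> D"
    using assms unfolding is_interval_def atLeastAtMost_iff by blast
qed

lemma finite_interval_eq_atLeastAtMost:
  assumes "is_interval D" "finite D" "D \<noteq> {}"
  shows "D = {Min D..Max D}"
  using is_interval_atLeastAtMost_subset[OF assms(1) Min_in Max_in] assms by auto

lemma stable_map_le: "stable \<tau> \<beta> \<Longrightarrow> \<alpha> \<subseteq>\<^sub>m \<beta> \<Longrightarrow> stable \<tau> \<alpha>"
  unfolding stable_def map_le_def by (metis domIff)

lemma restrict_map_le: "m |` A \<subseteq>\<^sub>m m"
  by (auto simp: map_le_def restrict_map_def)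

lemma ran_map_le: "f \<subseteq>\<^sub>m g \<Longrightarrow> ran f \<subseteq> ran g"
  by (auto simp: map_le_def ran_def dom_def) (metis option.distinct(1))

lemma step_map_le: "step T \<tau> \<alpha> \<beta> \<Longrightarrow> \<alpha> \<subseteq>\<^sub>m \<beta>"
  by (auto simp: step_def map_le_def)

lemma reachable_map_le: "(step T \<tau>)\<^sup>*\<^sup>* \<alpha> \<beta> \<Longrightarrow> \<alpha> \<subseteq>\<^sub>m \<beta>"
  by (induction rule: rtranclp_induct) (auto dest: step_map_le intro: map_le_trans)

lemma reachable_assembly:
  assumes "(step T \<tau>)\<^sup>*\<^sup>* \<sigma> \<gamma>" "is_system T \<sigma> \<tau>"
  shows "is_assembly \<gamma> \<and> stable \<tau> \<gamma> \<and> ran \<gamma> \<subseteq> T"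
  using assms(1)
proof (induction rule: rtranclp_induct)
  case base
  then show ?case using assms(2) by (simp add: is_system_def)
next
  case (step \<beta> \<gamma>)
  then show ?case by (auto simp: step_def)
qed

lemma step_attaches:
  assumes "step T \<tau> \<alpha> \<beta>" "dom \<alpha> \<noteq> {}"
  obtains x t where "t \<in> T" "\<alpha> x = None" "\<beta> = \<alpha>(x \<mapsto> t)" "stable \<tau> \<beta>"
    "x - 1 \<in> dom \<alpha> \<or> x + 1 \<in> dom \<alpha>"
proof -
  obtain x t where xt: "t \<in> T" "\<alpha> x = None" "\<beta> = \<alpha>(x \<mapsto> t)" "is_assembly \<beta>" "stable \<tau> \<beta>"
    using assms(1) unfolding step_def by blast
  obtain y where "y \<in> dom \<alpha>"
    using assms(2) by blast
  then have "y \<noteq> x" "y \<in> dom \<beta>" "x \<in> dom \<beta>"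
    using xt(2,3) by auto
  have iv: "is_interval (dom \<beta>)"
    using xt(4) by (simp add: is_assembly_def)
  have "x - 1 \<in> dom \<beta> \<or> x + 1 \<in> dom \<beta>"
  proof (cases "y < x")
    case True
    then have "x - 1 \<in> {y..x}"
      by simp
    then show ?thesis
      using is_interval_atLeastAtMost_subset[OF iv \<open>y \<in> dom \<beta>\<close> \<open>x \<in> dom \<beta>\<close>] by blast
  next
    case False
    then have "x + 1 \<in> {x..y}"
      using \<open>y \<noteq> x\<close> by simp
    then show ?thesis
      using is_interval_atLeastAtMost_subset[OF iv \<open>x \<in> dom \<beta>\<close> \<open>y \<in> dom \<beta>\<close>] by blast
  qed
  then have "x - 1 \<in> dom \<alpha> \<or> x + 1 \<in> dom \<alpha>"
    using xt(3) by auto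
  then show ?thesis
    using that xt by blast
qed

lemma seq_limit_at: "seq_limit f \<beta> \<Longrightarrow> f i x = Some t \<Longrightarrow> \<beta> x = Some t"
  unfolding seq_limit_def by (metis option.distinct(1))

lemma produces_map_le:
  assumes "produces T \<tau> \<alpha> \<beta>"
  shows "\<alpha> \<subseteq>\<^sub>m \<beta>"
proof -
  consider "(step T \<tau>)\<^sup>*\<^sup>* \<alpha> \<beta>" | f where "f 0 = \<alpha>" "seq_limit f \<beta>"
    using assms unfolding produces_def by blast
  then show ?thesis
  proof cases
    case 1
    then show ?thesis by (rule reachable_map_le)
  next
    case 2
    then show ?thesis unfolding map_le_def using seq_limit_at[of f \<beta> 0] by fastforce
  qed
qed

lemma produces_tile_reachable:
  assumes "produces T \<tau> \<alpha> \<beta>" "\<beta> x = Some t"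
  shows "\<exists>\<gamma>. (step T \<tau>)\<^sup>*\<^sup>* \<alpha> \<gamma> \<and> \<gamma> x = Some t"
  using assms(1) unfolding produces_def
proof
  assume "\<exists>f. f 0 = \<alpha> \<and> (\<forall>i. step T \<tau> (f i) (f (Suc i))) \<and> seq_limit f \<beta>"
  then obtain f where f: "f 0 = \<alpha>" "\<And>i. step T \<tau> (f i) (f (Suc i))" "seq_limit f \<beta>"
    by blast
  obtain i where "f i x = Some t"
    using f(3) assms(2) unfolding seq_limit_def by (metis option.distinct(1))
  moreover have "(step T \<tau>)\<^sup>*\<^sup>* (f 0) (f i)"
    by (induction i) (auto intro: rtranclp.rtrancl_into_rtrancl f(2))
  ultimately show ?thesis using f(1) by blast
qed (use assms(2) in blast)

lemma seed_producible: "\<sigma> \<in> prodA T \<sigma> \<tau>"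
  by (simp add: prodA_def produces_def)

lemma step_restrict_atMost:
  assumes "dom \<beta> = {a..}" "a \<le> c" "ran \<beta> \<subseteq> T" "stable \<tau> \<beta>"
  shows "step T \<tau> (\<beta> |` {..c}) (\<beta> |` {..c + 1})"
  unfolding step_def
proof (intro exI conjI)
  have "c + 1 \<in> dom \<beta>"
    using assms(1,2) by simp
  then show "\<beta> |` {..c + 1} = (\<beta> |` {..c})(c + 1 \<mapsto> the (\<beta> (c + 1)))"
    by (auto simp: restrict_map_def)
  show "the (\<beta> (c + 1)) \<in> T"
    using \<open>c + 1 \<in> dom \<beta>\<close> assms(3) by (metis domD option.sel ranI subsetD)
  have "dom (\<beta> |` {..c + 1}) = {a..c + 1}"
    using assms(1) by auto
  then show "is_assembly (\<beta> |` {..c + 1})"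
    using assms(2) by (simp add: is_assembly_def is_interval_atLeastAtMost)
  show "stable \<tau> (\<beta> |` {..c + 1})"
    using assms(4) restrict_map_le by (rule stable_map_le)
qed (simp add: restrict_map_def)

lemma seq_limit_restrict_atMost: "seq_limit (\<lambda>k. \<beta> |` {..b + int k}) \<beta>"
  unfolding seq_limit_def
proof (intro allI conjI impI)
  fix x
  have "x \<in> {..b + int (nat (x - b))}"
    by simp
  then show "\<beta> x = None \<longleftrightarrow> (\<forall>k. (\<beta> |` {..b + int k}) x = None)"
    by (metis restrict_map_def)
  show "\<beta> x = (\<beta> |` {..b + int k}) x" if "(\<beta> |` {..b + int k}) x \<noteq> None" for k
    using that by (simp add: restrict_map_def split: if_splits)
qed

lemma produces_rightward:
  assumes dom_\<alpha>: "dom \<alpha> = {a..b}" and "a \<le> b"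
    and \<beta>_left: "\<And>x. x \<le> b \<Longrightarrow> \<beta> x = \<alpha> x"
    and \<beta>_right: "{b<..} \<subseteq> dom \<beta>"
    and "ran \<beta> \<subseteq> T" "stable \<tau> \<beta>"
  shows "produces T \<tau> \<alpha> \<beta>"
proof -
  have "x \<in> dom \<beta> \<longleftrightarrow> a \<le> x" for x
  proof (cases "x \<le> b")
    case True
    then have "x \<in> dom \<beta> \<longleftrightarrow> x \<in> dom \<alpha>"
      by (simp add: domIff \<beta>_left)
    then show ?thesis
      using True dom_\<alpha> by simp
  next
    case False
    then have "x \<in> dom \<beta>"
      using \<beta>_right by (meson greaterThan_iff not_le subsetD)
    then show ?thesis
      using False \<open>a \<le> b\<close> by simp
  qed
  then have "dom \<beta> = {a..}"
    by auto
  then have "step T \<tau> (\<beta> |` {..b + int k}) (\<beta> |` {..b + int (Suc k)})" for k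
    using step_restrict_atMost[of \<beta> a "b + int k"] \<open>a \<le> b\<close> assms(5,6) by (simp add: ac_simps)
  moreover have "\<beta> |` {..b} = \<alpha>"
  proof
    fix x
    show "(\<beta> |` {..b}) x = \<alpha> x"
    proof (cases "x \<le> b")
      case False
      then have "\<alpha> x = None"
        using dom_\<alpha> by (metis atLeastAtMost_iff domIff)
      then show ?thesis
        using False by simp
    qed (simp add: \<beta>_left)
  qed
  ultimately show ?thesis
    unfolding produces_def using seq_limit_restrict_atMost[of \<beta> b]
    by (intro disjI2 exI[of _ "\<lambda>k. \<beta> |` {..b + int k}"]) simp
qed

section \<open>Pumping\<close>

definition pump :: "assembly \<Rightarrow> int \<Rightarrow> int \<Rightarrow> assembly" where
  "pump \<gamma> i j x = (if x < i then \<gamma> x else \<gamma> (i + (x - i) mod (j - i)))"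

lemma pump_eq:
  assumes "i < j" "\<gamma> i = \<gamma> j" "x \<le> j"
  shows "pump \<gamma> i j x = \<gamma> x"
proof (cases "x < j")
  case True
  then show ?thesis by (simp add: pump_def)
next
  case False
  then show ?thesis using assms by (simp add: pump_def)
qed

(* The wrap-around cut from j - 1 to j is a cut of \<gamma> because \<gamma> i = \<gamma> j. *)
lemma pump_cut:
  assumes "i < j" "\<gamma> i = \<gamma> j"
  obtains y where "pump \<gamma> i j x = \<gamma> y" "pump \<gamma> i j (x + 1) = \<gamma> (y + 1)"
proof (cases "x < i")
  case True
  then have "x \<le> j" "x + 1 \<le> j"
    using assms(1) by linarith+
  then show ?thesis
    by (intro that[of x] pump_eq[OF assms])
next
  case False
  define r where "r = (x - i) mod (j - i)"
  have r: "0 \<le> r" "r < j - i" using assms(1) by (simp_all add: r_def)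
  have "(x + 1 - i) mod (j - i) = (r + 1) mod (j - i)"
    unfolding r_def by (simp add: mod_add_left_eq diff_add_eq)
  also have "\<dots> = (if r + 1 = j - i then 0 else r + 1)"
    using r by auto
  finally have "pump \<gamma> i j (x + 1) = \<gamma> (i + r + 1)"
    using False assms(2) by (auto simp: pump_def add.assoc split: if_splits)
  moreover have "pump \<gamma> i j x = \<gamma> (i + r)"
    using False by (simp add: pump_def r_def)
  ultimately show ?thesis using that[of "i + r"] by simp
qed

lemma pump_in_period:
  assumes "i < j" "i \<le> x"
  obtains y where "pump \<gamma> i j x = \<gamma> y" "i \<le> y" "y < j"
proof (rule that)
  show "pump \<gamma> i j x = \<gamma> (i + (x - i) mod (j - i))"
    using assms(2) by (simp add: pump_def)
  have "(x - i) mod (j - i) < j - i"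
    using assms(1) by simp
  then show "i + (x - i) mod (j - i) < j" by simp
qed (use assms(1) in \<open>simp add: pos_mod_sign\<close>)

lemma ran_pump: "ran (pump \<gamma> i j) \<subseteq> ran \<gamma>"
  unfolding pump_def ran_def by auto

lemma stable_pump:
  assumes "stable \<tau> \<gamma>" "i < j" "\<gamma> i = \<gamma> j"
  shows "stable \<tau> (pump \<gamma> i j)"
  unfolding stable_def
proof (intro allI impI)
  fix x
  assume "x \<in> dom (pump \<gamma> i j)" "x + 1 \<in> dom (pump \<gamma> i j)"
  moreover obtain y where "pump \<gamma> i j x = \<gamma> y" "pump \<gamma> i j (x + 1) = \<gamma> (y + 1)"
    using pump_cut[OF assms(2,3)] by metis
  ultimately show "\<tau> \<le> strength (the (pump \<gamma> i j x)) (the (pump \<gamma> i j (x + 1)))"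
    using assms(1) unfolding stable_def by (simp add: domIff)
qed

lemma dom_pump:
  assumes "i < j" "lo \<le> i" "{lo..j} \<subseteq> dom \<gamma>"
  shows "{lo..} \<subseteq> dom (pump \<gamma> i j)"
proof
  fix x
  assume "x \<in> {lo..}"
  obtain y where "pump \<gamma> i j x = \<gamma> y" "y \<in> {lo..j}"
  proof (cases "x < i")
    case True
    then show ?thesis
      using that[of x] \<open>x \<in> {lo..}\<close> assms(1) by (simp add: pump_def)
  next
    case False
    then have "i \<le> x"
      by simp
    obtain y where "pump \<gamma> i j x = \<gamma> y" "i \<le> y" "y < j"
      by (rule pump_in_period[OF assms(1) \<open>i \<le> x\<close>])
    then show ?thesis
      using that assms(2) by simp
  qed
  moreover have "y \<in> dom \<gamma>"
    using \<open>y \<in> {lo..j}\<close> assms(3) by (rule subsetD[rotated])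
  ultimately show "x \<in> dom (pump \<gamma> i j)"
    by (metis domIff)
qed

lemma repeated_tile:
  assumes "finite T" "ran \<gamma> \<subseteq> T" "{a..a + int (card T)} \<subseteq> dom \<gamma>"
  obtains i j where "a \<le> i" "i < j" "j \<le> a + int (card T)" "\<gamma> i = \<gamma> j"
proof -
  let ?A = "{a..a + int (card T)}"
  have "the (\<gamma> x) \<in> T" if "x \<in> ?A" for x
    using assms(2,3) that by (metis domD option.sel ranI subsetD)
  then have "(\<lambda>x. the (\<gamma> x)) ` ?A \<subseteq> T"
    by blast
  moreover have "card T < card ?A"
    by simp
  ultimately have "\<not> inj_on (\<lambda>x. the (\<gamma> x)) ?A"
    using card_inj_on_le[OF _ _ assms(1)] by fastforce
  then obtain x y where xy: "x \<in> ?A" "y \<in> ?A" "x < y" "the (\<gamma> x) = the (\<gamma> y)"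
    unfolding inj_on_def by (metis linorder_neqE)
  then have "\<gamma> x = \<gamma> y"
    using assms(3) by (metis domD option.sel subsetD)
  then show ?thesis
    using that xy by simp
qed

lemma produces_pumped:
  assumes sys: "is_system T \<sigma> \<tau>" and reach: "(step T \<tau>)\<^sup>*\<^sup>* \<sigma> \<gamma>"
    and dom_\<sigma>: "dom \<sigma> = {a..b}" "a \<le> b"
    and ij: "b < i" "i < j" "\<gamma> i = \<gamma> j" "{b..j} \<subseteq> dom \<gamma>"
  obtains \<delta> where "produces T \<tau> \<sigma> \<delta>" "{b<..} \<subseteq> dom \<delta>"
proof -
  have \<gamma>: "stable \<tau> \<gamma>" "ran \<gamma> \<subseteq> T" "\<sigma> \<subseteq>\<^sub>m \<gamma>"
    using reachable_assembly[OF reach sys] reachable_map_le[OF reach] by auto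
  define \<delta> where "\<delta> x = (if x \<le> b then \<sigma> x else pump \<gamma> i j x)" for x
  have "\<delta> \<subseteq>\<^sub>m pump \<gamma> i j"
    using \<gamma>(3) ij(1,2) pump_eq[OF ij(2,3)] by (auto simp: map_le_def \<delta>_def)
  have "{b + 1..j} \<subseteq> {b..j}"
    by auto
  then have "{b + 1..j} \<subseteq> dom \<gamma>"
    using ij(4) by (rule order_trans)
  then have pump_right: "{b + 1..} \<subseteq> dom (pump \<gamma> i j)"
    using dom_pump[OF ij(2)] ij(1) by simp
  have "{b<..} \<subseteq> dom \<delta>"
  proof
    fix x
    assume "x \<in> {b<..}"
    then have "\<delta> x = pump \<gamma> i j x" "x \<in> {b + 1..}"
      by (simp_all add: \<delta>_def)
    then show "x \<in> dom \<delta>"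
      using pump_right by (metis domIff subsetD)
  qed
  moreover have "produces T \<tau> \<sigma> \<delta>"
  proof (rule produces_rightward[OF dom_\<sigma> _ \<open>{b<..} \<subseteq> dom \<delta>\<close>])
    show "\<delta> x = \<sigma> x" if "x \<le> b" for x
      using that by (simp add: \<delta>_def)
    show "ran \<delta> \<subseteq> T"
      using ran_map_le[OF \<open>\<delta> \<subseteq>\<^sub>m pump \<gamma> i j\<close>] ran_pump \<gamma>(2) by blast
    show "stable \<tau> \<delta>"
      using stable_map_le[OF stable_pump[OF \<gamma>(1) ij(2,3)] \<open>\<delta> \<subseteq>\<^sub>m pump \<gamma> i j\<close>] .
  qed
  ultimately show ?thesis
    using that by blast
qed

lemma producible_unbounded:
  assumes sys: "is_system T \<sigma> \<tau>" and "\<alpha> \<in> prodA T \<sigma> \<tau>" "p \<in> dom \<alpha>"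
    and far: "\<And>x. x \<in> dom \<sigma> \<Longrightarrow> x + int (card T) < p"
  obtains \<delta> where "\<delta> \<in> prodA T \<sigma> \<tau>" "{p..} \<subseteq> dom \<delta>"
proof -
  obtain t where "\<alpha> p = Some t"
    using assms(3) by blast
  then obtain \<gamma> where reach: "(step T \<tau>)\<^sup>*\<^sup>* \<sigma> \<gamma>" and "\<gamma> p = Some t"
    using produces_tile_reachable assms(2) unfolding prodA_def by blast
  then have "p \<in> dom \<gamma>"
    by blast
  have \<gamma>: "is_assembly \<gamma>" "ran \<gamma> \<subseteq> T" "\<sigma> \<subseteq>\<^sub>m \<gamma>"
    using reachable_assembly[OF reach sys] reachable_map_le[OF reach] by auto
  define a b where "a = Min (dom \<sigma>)" and "b = Max (dom \<sigma>)"
  have dom_\<sigma>: "dom \<sigma> = {a..b}" and "a \<le> b"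
    using sys finite_interval_eq_atLeastAtMost[of "dom \<sigma>"]
    by (auto simp: is_system_def is_assembly_def a_def b_def)
  have "b \<in> dom \<gamma>"
    using dom_\<sigma> \<open>a \<le> b\<close> map_le_implies_dom_le[OF \<gamma>(3)] by auto
  then have between: "{b..p} \<subseteq> dom \<gamma>"
    using \<gamma>(1) \<open>p \<in> dom \<gamma>\<close> is_interval_atLeastAtMost_subset by (simp add: is_assembly_def)
  have "b + int (card T) < p"
    using far dom_\<sigma> \<open>a \<le> b\<close> by simp
  then have "{b + 1..b + 1 + int (card T)} \<subseteq> {b..p}"
    by auto
  then have "{b + 1..b + 1 + int (card T)} \<subseteq> dom \<gamma>"
    using between by (rule order_trans)
  then obtain i j where ij: "b + 1 \<le> i" "i < j" "j \<le> b + 1 + int (card T)" "\<gamma> i = \<gamma> j"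
    using repeated_tile[of T \<gamma> "b + 1"] sys \<gamma>(2) by (auto simp: is_system_def)
  have "{b..j} \<subseteq> {b..p}"
    using ij(3) \<open>b + int (card T) < p\<close> by auto
  then have "{b..j} \<subseteq> dom \<gamma>"
    using between by (rule order_trans)
  then obtain \<delta> where "produces T \<tau> \<sigma> \<delta>" "{b<..} \<subseteq> dom \<delta>"
    using produces_pumped[OF sys reach dom_\<sigma> \<open>a \<le> b\<close> _ ij(2,4)] ij(1) by auto
  moreover have "{p..} \<subseteq> {b<..}"
    using \<open>b + int (card T) < p\<close> by auto
  ultimately show ?thesis
    using that by (simp add: prodA_def)
qed

section \<open>Clean mappings and simulations\<close>

lemma simulatesD:
  assumes "simulates S \<sigma>' \<tau>' T \<sigma> \<tau> m R"
  shows "0 < m" "Rstar m R ` prodA S \<sigma>' \<tau>' = prodA T \<sigma> \<tau>"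
    and "\<And>\<alpha>'. \<alpha>' \<in> prodA S \<sigma>' \<tau>' \<Longrightarrow> maps_cleanly m R \<alpha>'"
  using assms unfolding simulates_def by blast+

lemma mblock_empty_iff:
  "mblock m \<alpha> x = Map.empty \<longleftrightarrow> (\<forall>i<m. \<alpha> (int m * x + int i) = None)"
  by (auto simp: mblock_def fun_eq_iff)

lemma mblock_div_nonempty:
  assumes "0 < m" "\<alpha> y \<noteq> None"
  shows "mblock m \<alpha> (y div int m) \<noteq> Map.empty"
proof -
  have "nat (y mod int m) < m" "int m * (y div int m) + int (nat (y mod int m)) = y"
    using assms(1) by (simp_all add: nat_less_iff)
  then show ?thesis
    using assms(2) mblock_empty_iff by metis
qed

lemma Rstar_empty_block:
  "mblock m \<alpha> x = Map.empty \<Longrightarrow> Rstar m R \<alpha> x = R Map.empty"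
  by (simp add: Rstar_def)

lemma maps_cleanly_near_dom:
  assumes "maps_cleanly m R \<alpha>" "dom (Rstar m R \<alpha>) \<noteq> {}" "mblock m \<alpha> x \<noteq> Map.empty"
  shows "\<exists>u\<in>{-1, 0, 1}. x + u \<in> dom (Rstar m R \<alpha>)"
  using assms(1) unfolding maps_cleanly_def
proof
  assume "\<forall>x. mblock m \<alpha> x \<noteq> Map.empty \<longrightarrow> (\<exists>u\<in>{-1, 0, 1}. x + u \<in> dom (Rstar m R \<alpha>))"
  then show ?thesis
    using assms(3) by blast
next
  assume single: "\<forall>x y. mblock m \<alpha> x \<noteq> Map.empty \<longrightarrow> mblock m \<alpha> y \<noteq> Map.empty \<longrightarrow> x = y"
  show ?thesis
  proof (cases "x \<in> dom (Rstar m R \<alpha>)")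
    case True
    then show ?thesis
      by (intro bexI[of _ 0]) simp_all
  next
    case False
    obtain y where "y \<in> dom (Rstar m R \<alpha>)"
      using assms(2) by blast
    moreover have "y \<noteq> x" "x + 1 \<noteq> x"
      using False \<open>y \<in> dom (Rstar m R \<alpha>)\<close> by auto
    then have "mblock m \<alpha> y = Map.empty" "mblock m \<alpha> (x + 1) = Map.empty"
      using single assms(3) by blast+
    ultimately have "x + 1 \<in> dom (Rstar m R \<alpha>)"
      by (simp add: Rstar_empty_block domIff)
    then show ?thesis by blast
  qed
qed

(* If empty blocks represented a tile, every block far right of the finite represented
   domain would be represented. *)
lemma maps_cleanly_empty_block_unmapped:
  assumes "maps_cleanly m R \<alpha>" "finite (dom (Rstar m R \<alpha>))" "dom (Rstar m R \<alpha>) \<noteq> {}"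
  shows "R Map.empty = None"
proof (rule ccontr)
  assume empty_mapped: "R Map.empty \<noteq> None"
  define x where "x = Max (dom (Rstar m R \<alpha>)) + 2"
  have outside: "x + u \<notin> dom (Rstar m R \<alpha>)" if "u \<in> {-1, 0, 1}" for u
  proof -
    have "Max (dom (Rstar m R \<alpha>)) < x + u"
      using that by (auto simp: x_def)
    then show ?thesis
      using Max_ge[OF assms(2)] by (meson not_le)
  qed
  then have "mblock m \<alpha> x \<noteq> Map.empty"
    using empty_mapped Rstar_empty_block[of m \<alpha> x R] by (force simp: domIff)
  then show False
    using maps_cleanly_near_dom[OF assms(1,3)] outside by blast
qed

lemma maps_cleanly_bounded:
  assumes "0 < m" "maps_cleanly m R \<alpha>" "dom (Rstar m R \<alpha>) \<noteq> {}"
    and "dom (Rstar m R \<alpha>) \<subseteq> {..<N}" "\<alpha> y \<noteq> None"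
  shows "y < int m * (N + 1)"
proof -
  define x where "x = y div int m"
  obtain u where "u \<in> {-1, 0, 1}" "x + u \<in> dom (Rstar m R \<alpha>)"
    using maps_cleanly_near_dom[OF assms(2,3) mblock_div_nonempty[of m \<alpha> y, OF assms(1,5)]] x_def by blast
  then have "x + 1 \<le> N + 1"
    using assms(4) by force
  have "y = int m * x + y mod int m" "y mod int m < int m"
    using assms(1) by (simp_all add: x_def)
  then have "y < int m * (x + 1)"
    by (simp add: algebra_simps)
  also have "\<dots> \<le> int m * (N + 1)"
    using \<open>x + 1 \<le> N + 1\<close> by (simp add: mult_left_mono)
  finally show ?thesis .
qed

lemma simulates_dom_nonempty:
  assumes "is_system T \<sigma> \<tau>" "simulates S \<sigma>' \<tau>' T \<sigma> \<tau> m R" "\<alpha>' \<in> prodA S \<sigma>' \<tau>'"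
  shows "dom (Rstar m R \<alpha>') \<noteq> {}"
proof -
  have "Rstar m R \<alpha>' \<in> prodA T \<sigma> \<tau>"
    using simulatesD(2)[OF assms(2)] assms(3) by blast
  then have "dom \<sigma> \<subseteq> dom (Rstar m R \<alpha>')"
    by (simp add: prodA_def produces_map_le map_le_implies_dom_le)
  then show ?thesis
    using assms(1) by (auto simp: is_system_def is_assembly_def)
qed

lemma simulates_empty_block_unmapped:
  assumes "is_system T \<sigma> \<tau>" "simulates S \<sigma>' \<tau>' T \<sigma> \<tau> m R"
  shows "R Map.empty = None"
proof -
  obtain \<alpha>' where "\<alpha>' \<in> prodA S \<sigma>' \<tau>'" "Rstar m R \<alpha>' = \<sigma>"
    using simulatesD(2)[OF assms(2)] seed_producible by (metis imageE)
  then show ?thesis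
    using maps_cleanly_empty_block_unmapped simulatesD(3)[OF assms(2)]
      simulates_dom_nonempty[OF assms] assms(1)
    by (metis is_system_def)
qed

lemma simulates_bounded:
  assumes "is_system T \<sigma> \<tau>" "simulates S \<sigma>' \<tau>' T \<sigma> \<tau> m R" "\<alpha>' \<in> prodA S \<sigma>' \<tau>'"
    and "dom (Rstar m R \<alpha>') \<subseteq> {..<N}" "\<alpha>' y \<noteq> None"
  shows "y < int m * (N + 1)"
  using maps_cleanly_bounded simulatesD[OF assms(2)] simulates_dom_nonempty[OF assms(1-3)] assms(3-5)
  by blast

lemma simulates_seed_bounded:
  assumes "is_system T \<sigma> \<tau>" "simulates S \<sigma>' \<tau>' T \<sigma> \<tau> m R"
    and "dom \<sigma> \<subseteq> {..<N}" "\<sigma>' y \<noteq> None"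
  shows "y < int m * (N + 1)"
proof -
  obtain \<alpha>' where "\<alpha>' \<in> prodA S \<sigma>' \<tau>'" "Rstar m R \<alpha>' = \<sigma>"
    using simulatesD(2)[OF assms(2)] seed_producible by (metis imageE)
  moreover have "\<alpha>' y \<noteq> None"
    using \<open>\<alpha>' \<in> prodA S \<sigma>' \<tau>'\<close> assms(4) produces_map_le
    by (metis map_le_def domIff mem_Collect_eq prodA_def)
  ultimately show ?thesis
    using simulates_bounded[OF assms(1,2)] assms(3) by blast
qed

lemma simulates_reaches:
  assumes "is_system T \<sigma> \<tau>" "simulates S \<sigma>' \<tau>' T \<sigma> \<tau> m R"
    and "\<alpha> \<in> prodA T \<sigma> \<tau>" "x \<in> dom \<alpha>"
  obtains \<alpha>' y where "\<alpha>' \<in> prodA S \<sigma>' \<tau>'" "int m * x \<le> y" "y \<in> dom \<alpha>'"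
proof -
  obtain \<alpha>' where \<alpha>': "\<alpha>' \<in> prodA S \<sigma>' \<tau>'" "Rstar m R \<alpha>' = \<alpha>"
    using simulatesD(2)[OF assms(2)] assms(3) by (metis imageE)
  then have "mblock m \<alpha>' x \<noteq> Map.empty"
    using assms(4) simulates_empty_block_unmapped[OF assms(1,2)] Rstar_empty_block
    by (metis domIff)
  then obtain i where "\<alpha>' (int m * x + int i) \<noteq> None"
    using mblock_empty_iff by blast
  then show ?thesis
    using that[OF \<alpha>'(1), of "int m * x + int i"] by (simp add: domIff)
qed

section \<open>The counter system\<close>

definition counter_tile :: "nat \<Rightarrow> tile" where
  "counter_tile i = ((replicate i CHR ''a'', 1), (replicate (Suc i) CHR ''a'', 1))"

definition counter_tiles :: "nat \<Rightarrow> tile set" where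
  "counter_tiles k = counter_tile ` {..k}"

definition counter_prefix :: "nat \<Rightarrow> assembly" where
  "counter_prefix j x = (if 0 \<le> x \<and> x \<le> int j then Some (counter_tile (nat x)) else None)"

lemma strength_counter_tile:
  "strength (counter_tile i) (counter_tile j) = (if j = Suc i then 1 else 0)"
  by (cases j) (simp_all add: strength_def counter_tile_def east_def west_def)

lemma dom_counter_prefix: "dom (counter_prefix j) = {0..int j}"
  by (auto simp: counter_prefix_def domIff split: if_splits)

lemma counter_prefix_le: "i \<le> j \<Longrightarrow> counter_prefix i \<subseteq>\<^sub>m counter_prefix j"
  by (auto simp: map_le_def counter_prefix_def dom_counter_prefix)

lemma stable_counter_prefix: "stable 1 (counter_prefix j)"
  unfolding stable_def dom_counter_prefix
  by (auto simp: counter_prefix_def strength_counter_tile nat_add_distrib)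

lemma counter_system: "is_system (counter_tiles k) (counter_prefix 0) 1"
  unfolding is_system_def is_assembly_def
  using stable_counter_prefix[of 0] is_interval_atLeastAtMost[of 0 0]
  by (auto simp: dom_counter_prefix counter_tiles_def counter_prefix_def ran_def split: if_splits)

lemma counter_prefix_step:
  assumes "j < k"
  shows "step (counter_tiles k) 1 (counter_prefix j) (counter_prefix (Suc j))"
  unfolding step_def
proof (intro exI conjI)
  show "counter_tile (Suc j) \<in> counter_tiles k"
    using assms by (simp add: counter_tiles_def)
  show "counter_prefix j (int (Suc j)) = None"
    by (simp add: counter_prefix_def)
  show "counter_prefix (Suc j) = (counter_prefix j)(int (Suc j) \<mapsto> counter_tile (Suc j))"
    by (auto simp: counter_prefix_def fun_eq_iff nat_add_distrib)
  show "is_assembly (counter_prefix (Suc j))"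
    by (simp add: is_assembly_def dom_counter_prefix is_interval_atLeastAtMost)
qed (rule stable_counter_prefix)

lemma counter_prefix_producible:
  assumes "j \<le> k"
  shows "counter_prefix j \<in> prodA (counter_tiles k) (counter_prefix 0) 1"
proof -
  have "(step (counter_tiles k) 1)\<^sup>*\<^sup>* (counter_prefix 0) (counter_prefix j)"
    using assms
  proof (induction j)
    case (Suc j)
    then show ?case
      using counter_prefix_step by (meson Suc_le_lessD rtranclp.rtrancl_into_rtrancl Suc_leD)
  qed simp
  then show ?thesis
    by (simp add: prodA_def produces_def)
qed

lemma map_le_counter_prefixD:
  assumes "\<alpha> \<subseteq>\<^sub>m counter_prefix k" "y \<in> dom \<alpha>"
  shows "\<alpha> y = Some (counter_tile (nat y)) \<and> 0 \<le> y"
proof -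
  have "counter_prefix k y = \<alpha> y"
    using assms unfolding map_le_def by simp
  moreover have "\<alpha> y \<noteq> None"
    using assms(2) by (rule domIff[THEN iffD1])
  ultimately show ?thesis
    by (simp add: counter_prefix_def split: if_splits)
qed

lemma counter_step_le_prefix:
  assumes "step (counter_tiles k) 1 \<alpha> \<beta>" "\<alpha> \<subseteq>\<^sub>m counter_prefix k" "dom \<alpha> \<noteq> {}"
  shows "\<beta> \<subseteq>\<^sub>m counter_prefix k"
proof -
  obtain x t where xt: "t \<in> counter_tiles k" "\<alpha> x = None" "\<beta> = \<alpha>(x \<mapsto> t)" "stable 1 \<beta>"
    and adj: "x - 1 \<in> dom \<alpha> \<or> x + 1 \<in> dom \<alpha>"
    by (rule step_attaches[OF assms(1,3)])
  obtain c where c: "c \<le> k" "t = counter_tile c"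
    using xt(1) by (auto simp: counter_tiles_def)
  have cut: "1 \<le> strength (the (\<beta> y)) (the (\<beta> (y + 1)))"
    if "y \<in> dom \<beta>" "y + 1 \<in> dom \<beta>" for y
    using xt(4) that unfolding stable_def by blast
  have \<beta>_x: "\<beta> x = Some (counter_tile c)"
    using xt(3) c(2) by simp
  have "x = int c"
    using adj
  proof
    assume left: "x - 1 \<in> dom \<alpha>"
    have "\<beta> (x - 1) = Some (counter_tile (nat (x - 1)))" "\<beta> (x - 1 + 1) = Some (counter_tile c)"
      using xt(3) map_le_counter_prefixD[OF assms(2) left] \<beta>_x by simp_all
    then have "1 \<le> strength (counter_tile (nat (x - 1))) (counter_tile c)"
      using cut[of "x - 1"] by (metis domI option.sel)
    then show "x = int c"
      using map_le_counter_prefixD[OF assms(2) left] by (simp add: strength_counter_tile split: if_splits)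
  next
    assume right: "x + 1 \<in> dom \<alpha>"
    have "\<beta> (x + 1) = Some (counter_tile (nat (x + 1)))"
      using xt(3) map_le_counter_prefixD[OF assms(2) right] by simp
    then have "1 \<le> strength (counter_tile c) (counter_tile (nat (x + 1)))"
      using cut[of x] \<beta>_x by (metis domI option.sel)
    then show "x = int c"
      using map_le_counter_prefixD[OF assms(2) right] by (simp add: strength_counter_tile split: if_splits)
  qed
  then have "counter_prefix k x = Some t"
    using c by (simp add: counter_prefix_def)
  then show ?thesis
    using assms(2) xt(3) by (auto simp: map_le_def)
qed

lemma counter_producible_le_prefix:
  assumes "\<alpha> \<in> prodA (counter_tiles k) (counter_prefix 0) 1"
  shows "\<alpha> \<subseteq>\<^sub>m counter_prefix k"
proof -
  have "\<gamma> \<subseteq>\<^sub>m counter_prefix k \<and> dom \<gamma> \<noteq> {}"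
    if "(step (counter_tiles k) 1)\<^sup>*\<^sup>* (counter_prefix 0) \<gamma>" for \<gamma>
    using that
  proof (induction rule: rtranclp_induct)
    case base
    then show ?case
      by (simp add: counter_prefix_le dom_counter_prefix)
  next
    case (step \<beta> \<gamma>)
    then show ?case
      using counter_step_le_prefix map_le_implies_dom_le[OF step_map_le] by blast
  qed
  note reachable_le = this
  show ?thesis
    unfolding map_le_def
  proof
    fix x
    assume "x \<in> dom \<alpha>"
    then obtain t where "\<alpha> x = Some t"
      by blast
    then obtain \<gamma> where "(step (counter_tiles k) 1)\<^sup>*\<^sup>* (counter_prefix 0) \<gamma>" "\<gamma> x = Some t"
      using produces_tile_reachable assms unfolding prodA_def by blast
    then have "counter_prefix k x = Some t"
      using reachable_le unfolding map_le_def by (metis domI)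
    then show "\<alpha> x = counter_prefix k x"
      using \<open>\<alpha> x = Some t\<close> by simp
  qed
qed

lemma counter_simulator_bounded:
  assumes sim: "simulates U \<sigma>' \<tau>' (counter_tiles k) (counter_prefix 0) 1 m R"
    and "\<alpha>' \<in> prodA U \<sigma>' \<tau>'" "\<alpha>' y \<noteq> None"
  shows "y < int m * (int k + 2)"
proof -
  have "Rstar m R \<alpha>' \<in> prodA (counter_tiles k) (counter_prefix 0) 1"
    using simulatesD(2)[OF sim] assms(2) by blast
  then have "dom (Rstar m R \<alpha>') \<subseteq> {..<int k + 1}"
    using map_le_implies_dom_le[OF counter_producible_le_prefix] by (fastforce simp: dom_counter_prefix)
  from simulates_bounded[OF counter_system sim assms(2) this assms(3)] show ?thesis
    by (simp add: add.assoc)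
qed

lemma counter_not_simulated:
  assumes "finite U" "is_system U \<sigma>' \<tau>'"
    and sim: "simulates U \<sigma>' \<tau>' (counter_tiles k) (counter_prefix 0) 1 m R"
    and "card U + 2 \<le> k"
  shows False
proof -
  have "0 < m"
    using simulatesD(1)[OF sim] .
  have seed: "x < 2 * int m" if "x \<in> dom \<sigma>'" for x
    using simulates_seed_bounded[OF counter_system sim, of 1 x] that
    by (simp add: dom_counter_prefix domIff)
  obtain \<alpha>'' p where "\<alpha>'' \<in> prodA U \<sigma>' \<tau>'" "int m * int k \<le> p" "p \<in> dom \<alpha>''"
    using simulates_reaches[OF counter_system sim counter_prefix_producible[OF order_refl], of "int k"]
    by (auto simp: dom_counter_prefix)
  \<comment> \<open>the |U| + 1 positions right of the seed lie below p\<close>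
  have "2 * m + card U \<le> 2 * m + m * card U"
    using \<open>0 < m\<close> by simp
  also have "\<dots> = m * (card U + 2)"
    by (simp add: algebra_simps)
  also have "\<dots> \<le> m * k"
    using \<open>card U + 2 \<le> k\<close> by (rule mult_le_mono2)
  finally have "int (2 * m + card U) \<le> int (m * k)"
    by (simp only: of_nat_le_iff)
  then have "2 * int m + int (card U) \<le> int m * int k"
    by simp
  then have "x + int (card U) < p" if "x \<in> dom \<sigma>'" for x
    using seed[OF that] \<open>int m * int k \<le> p\<close> by linarith
  then obtain \<delta> where "\<delta> \<in> prodA U \<sigma>' \<tau>'" "{p..} \<subseteq> dom \<delta>"
    using producible_unbounded[OF assms(2) \<open>\<alpha>'' \<in> prodA U \<sigma>' \<tau>'\<close> \<open>p \<in> dom \<alpha>''\<close>] by blast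
  define z where "z = max p (int m * (int k + 2))"
  have "z \<in> {p..}"
    by (simp add: z_def)
  then have "z \<in> dom \<delta>"
    by (rule subsetD[OF \<open>{p..} \<subseteq> dom \<delta>\<close>])
  then show False
    using counter_simulator_bounded[OF sim \<open>\<delta> \<in> prodA U \<sigma>' \<tau>'\<close>, of z] by (simp add: z_def domIff)
qed

theorem mainTheorem6:
  shows "\<not> (\<exists>(U :: tile set) (\<tau>' :: nat) (R :: system \<Rightarrow> nat \<times> (block \<rightharpoonup> tile))
              (S :: system \<Rightarrow> assembly).
            finite U
          \<and> computable_on valid_system enc_system (enc_rep U) R
          \<and> computable_on valid_system enc_system enc_asm S
          \<and> (\<forall>T \<sigma> \<tau>. is_system T \<sigma> \<tau> \<longrightarrow>
                is_system U (S (T, \<sigma>, \<tau>)) \<tau>'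
              \<and> simulates U (S (T, \<sigma>, \<tau>)) \<tau>' T \<sigma> \<tau>
                  (fst (R (T, \<sigma>, \<tau>))) (snd (R (T, \<sigma>, \<tau>)))))"
proof clarify
  fix U :: "tile set" and \<tau>' R S
  assume "finite U"
    and universal: "\<forall>T \<sigma> \<tau>. is_system T \<sigma> \<tau> \<longrightarrow>
        is_system U (S (T, \<sigma>, \<tau>)) \<tau>'
      \<and> simulates U (S (T, \<sigma>, \<tau>)) \<tau>' T \<sigma> \<tau> (fst (R (T, \<sigma>, \<tau>))) (snd (R (T, \<sigma>, \<tau>)))"
  show False
    using universal counter_system counter_not_simulated[OF \<open>finite U\<close>] by blast
qed

end
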